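(* Let $S$ be a finite generating subset of a group $G$ with $1\in S$, such that $S$ is $k$-separable. Let $H$ be a $k$-atom of $S$ with $1\in H$. Assume that either $G$ is infinite or $\alpha_k(S)\le\alpha_{-k}(S)$. If $|\Pi^r(H)|\ge k$, then $H$ is a subgroup of $G$.
   Context: For a group $G$ and $S\subseteq G$, the Cayley graph $\mathrm{Cay}(G,S)$ has vertex set $G$ and arcs $(x,y)$ with $x^{-1}y\in S$; so the image of $X\subseteq G$ is $XS$. For a graph $\Gamma=(V,E)$ (reflexive, locally finite), $\partial(X)=\Gamma(X)\setminus X$; $\Gamma$ is $k$-separable if some finite $X$ has $|X|\ge k$ and $|V\setminus\Gamma(X)|\ge k$; then $\kappa_k(\Gamma)=\min\{|\partial(X)|: X\text{ finite},|X|\ge k,|V\setminus\Gamma(X)|\ge k\}$, a $k$-fragment is such an $X$ attaining the minimum, a $k$-atom is a $k$-fragment of minimum cardinality, $\alpha_k(\Gamma)$ its cardinality. For $S$ with $1\in S$, $k$-fragments, $k$-atoms, $\kappa_k(S)$, $\alpha_k(S)$ refer to $\mathrm{Cay}(\langle S\rangle,S)$ ($\langle S\rangle$ the generated subgroup), $S$ is $k$-separable if this graph is, and $\alpha_{-k}(S)=\alpha_k(\mathrm{Cay}(\langle S\rangle,S^{-1}))$. $\Pi^r(X)=\{x\in G: Xx=X\}$. *)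

theory Defs
  imports "HOL-Algebra.Algebra"
begin

text \<open>Cayley graph Cay(<S>, S): vertex set generate Gr S, image of A is A S (set product).
  All notions below are relative to the group Gr (an HOL-Algebra group structure).\<close>

definition cay_vertices :: "('a, 'b) monoid_scheme \<Rightarrow> 'a set \<Rightarrow> 'a set" where
  "cay_vertices Gr S = generate Gr S"

definition cay_image :: "('a, 'b) monoid_scheme \<Rightarrow> 'a set \<Rightarrow> 'a set \<Rightarrow> 'a set" where
  "cay_image Gr S A = set_mult Gr A S"

definition cay_boundary :: "('a, 'b) monoid_scheme \<Rightarrow> 'a set \<Rightarrow> 'a set \<Rightarrow> 'a set" where
  "cay_boundary Gr S A = cay_image Gr S A - A"

definition card_ge :: "'a set \<Rightarrow> nat \<Rightarrow> bool" where
  "card_ge A k \<longleftrightarrow> infinite A \<or> k \<le> card A"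

definition k_admissible :: "('a, 'b) monoid_scheme \<Rightarrow> 'a set \<Rightarrow> nat \<Rightarrow> 'a set \<Rightarrow> bool" where
  "k_admissible Gr S k A \<longleftrightarrow> A \<subseteq> cay_vertices Gr S \<and> finite A \<and> k \<le> card A \<and>
     card_ge (cay_vertices Gr S - cay_image Gr S A) k"

definition k_separable :: "('a, 'b) monoid_scheme \<Rightarrow> 'a set \<Rightarrow> nat \<Rightarrow> bool" where
  "k_separable Gr S k \<longleftrightarrow> (\<exists>A. k_admissible Gr S k A)"

definition kappa :: "('a, 'b) monoid_scheme \<Rightarrow> 'a set \<Rightarrow> nat \<Rightarrow> nat" where
  "kappa Gr S k = (LEAST n. \<exists>A. k_admissible Gr S k A \<and> card (cay_boundary Gr S A) = n)"

definition k_fragment :: "('a, 'b) monoid_scheme \<Rightarrow> 'a set \<Rightarrow> nat \<Rightarrow> 'a set \<Rightarrow> bool" where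
  "k_fragment Gr S k A \<longleftrightarrow> k_admissible Gr S k A \<and> card (cay_boundary Gr S A) = kappa Gr S k"

definition k_atom :: "('a, 'b) monoid_scheme \<Rightarrow> 'a set \<Rightarrow> nat \<Rightarrow> 'a set \<Rightarrow> bool" where
  "k_atom Gr S k A \<longleftrightarrow> k_fragment Gr S k A \<and> (\<forall>B. k_fragment Gr S k B \<longrightarrow> card A \<le> card B)"

definition alpha :: "('a, 'b) monoid_scheme \<Rightarrow> 'a set \<Rightarrow> nat \<Rightarrow> nat" where
  "alpha Gr S k = (LEAST n. \<exists>A. k_fragment Gr S k A \<and> card A = n)"

definition alpha_neg :: "('a, 'b) monoid_scheme \<Rightarrow> 'a set \<Rightarrow> nat \<Rightarrow> nat" where
  "alpha_neg Gr S k = alpha Gr ((\<lambda>s. m_inv Gr s) ` S) k"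

definition Pi_r :: "('a, 'b) monoid_scheme \<Rightarrow> 'a set \<Rightarrow> 'a set" where
  "Pi_r Gr A = {x \<in> carrier Gr. r_coset Gr A x = A}"

end

theory Submission
  imports Defs
begin

text \<open>
  \<^item> Left translations are graph automorphisms, so every translate \<open>hH\<close> is again an atom.
  \<^item> For \<open>h \<in> H\<close> the translate \<open>hH\<close> meets \<open>H\<close> in the set \<open>h\<Pi>\<^sup>r(H)\<close>, of size at least \<open>k\<close>.
  \<^item> Intersection property: an atom \<open>A\<close> meeting a fragment \<open>B\<close> in at least \<open>k\<close> elements
    lies inside \<open>B\<close>.  By submodularity of the boundary, \<open>A \<inter> B\<close> is a fragment as soon as
    \<open>A \<union> B\<close> is admissible, i.e. leaves \<open>k\<close> vertices outside its image.  This is automatic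
    for infinite \<open>G\<close>; for finite \<open>G\<close> it follows by counting, using that the complement of the
    image of a fragment of \<open>S\<close> is a fragment of \<open>S\<^sup>-\<^sup>1\<close> and the hypothesis
    \<open>\<alpha>\<^sub>k(S) \<le> \<alpha>\<^sub>-\<^sub>k(S)\<close>.
  \<^item> Hence \<open>hH = H\<close> for all \<open>h \<in> H\<close>, and a set containing \<open>\<one>\<close> that is stable under left
    multiplication by its elements is a subgroup.
\<close>

lemma card_Diff_submodular:
  assumes "finite P" "finite Q"
  shows "card ((P \<inter> Q) - (C \<inter> D)) + card ((P \<union> Q) - (C \<union> D)) \<le> card (P - C) + card (Q - D)"
proof -
  let ?I = "(P \<inter> Q) - (C \<inter> D)" and ?J = "(P \<union> Q) - (C \<union> D)"
  let ?U = "P - C" and ?W = "Q - D"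
  have fin: "finite ?I" "finite ?J" "finite ?U" "finite ?W" using assms by auto
  have "card ?I + card ?J = card (?I \<union> ?J) + card (?I \<inter> ?J)"
    using card_Un_Int fin by blast
  also have "\<dots> \<le> card (?U \<union> ?W) + card (?U \<inter> ?W)"
    using fin by (intro add_mono card_mono) blast+
  also have "\<dots> = card ?U + card ?W"
    using card_Un_Int fin by metis
  finally show ?thesis .
qed

lemma card_ge_mono: "card_ge A k \<Longrightarrow> A \<subseteq> B \<Longrightarrow> card_ge B k"
  unfolding card_ge_def by (meson card_mono finite_subset le_trans)

lemma kappa_le: "k_admissible Gr S k A \<Longrightarrow> kappa Gr S k \<le> card (cay_boundary Gr S A)"
  unfolding kappa_def by (rule Least_le) blast

lemma kappa_attained:
  "k_separable Gr S k \<Longrightarrow> \<exists>A. k_fragment Gr S k A"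
  unfolding k_separable_def k_fragment_def kappa_def by (rule LeastI_ex) blast

lemma k_fragmentI:
  "k_admissible Gr S k A \<Longrightarrow> card (cay_boundary Gr S A) \<le> kappa Gr S k \<Longrightarrow> k_fragment Gr S k A"
  unfolding k_fragment_def using kappa_le[of Gr S k A] by simp

lemma alpha_atom: "k_atom Gr S k A \<Longrightarrow> alpha Gr S k = card A"
  unfolding alpha_def k_atom_def by (rule Least_equality) auto

lemma alpha_le: "k_fragment Gr S k A \<Longrightarrow> alpha Gr S k \<le> card A"
  unfolding alpha_def by (rule Least_le) blast

context group
begin

lemma set_mult_Un_left: "(A \<union> B) <#> S = (A <#> S) \<union> (B <#> S)"
  unfolding set_mult_def by auto

lemma set_mult_Int_left: "(A \<inter> B) <#> S \<subseteq> (A <#> S) \<inter> (B <#> S)"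
  unfolding set_mult_def by auto

lemma inv_image_inv_image: "S \<subseteq> carrier G \<Longrightarrow> m_inv G ` m_inv G ` S = S"
  by (force simp: image_image subsetD)

lemma generate_inv_image:
  assumes "S \<subseteq> carrier G" "generate G S = carrier G"
  shows "generate G (m_inv G ` S) = carrier G"
proof -
  have inv_S: "m_inv G ` S \<subseteq> carrier G" using assms(1) by auto
  have "S \<subseteq> generate G (m_inv G ` S)"
  proof
    fix s assume "s \<in> S"
    then have "inv (inv s) \<in> generate G (m_inv G ` S)"
      by (intro generate_m_inv_closed[OF inv_S] generate.incl) auto
    then show "s \<in> generate G (m_inv G ` S)" using \<open>s \<in> S\<close> assms(1) by auto
  qed
  then have "carrier G \<subseteq> generate G (m_inv G ` S)"
    using generate_subgroup_incl[OF _ generate_is_subgroup[OF inv_S]] assms(2) by metis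
  then show ?thesis using generate_incl[OF inv_S] by blast
qed

lemma card_translate: "g \<in> carrier G \<Longrightarrow> A \<subseteq> carrier G \<Longrightarrow> card ((\<otimes>) g ` A) = card A"
  by (rule card_image[OF inj_on_subset[OF inj_on_cmult]])

lemma card_ge_translate:
  "g \<in> carrier G \<Longrightarrow> A \<subseteq> carrier G \<Longrightarrow> card_ge ((\<otimes>) g ` A) k = card_ge A k"
  unfolding card_ge_def using card_translate[of g A] inj_on_subset[OF inj_on_cmult, of g A]
  by (simp add: finite_image_iff)

lemma translate_Diff:
  "g \<in> carrier G \<Longrightarrow> A \<subseteq> carrier G \<Longrightarrow> B \<subseteq> carrier G
    \<Longrightarrow> (\<otimes>) g ` (A - B) = (\<otimes>) g ` A - (\<otimes>) g ` B"
  by (rule inj_on_image_set_diff[OF inj_on_cmult]) auto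

lemma translate_carrier: "g \<in> carrier G \<Longrightarrow> (\<otimes>) g ` carrier G = carrier G"
proof (intro equalityI subsetI)
  fix x assume "g \<in> carrier G" "x \<in> carrier G"
  then have "x = g \<otimes> (inv g \<otimes> x)" by (simp add: m_assoc[symmetric])
  then show "x \<in> (\<otimes>) g ` carrier G" using \<open>g \<in> carrier G\<close> \<open>x \<in> carrier G\<close> by blast
qed auto

lemma set_mult_translate:
  "g \<in> carrier G \<Longrightarrow> A \<subseteq> carrier G \<Longrightarrow> S \<subseteq> carrier G
    \<Longrightarrow> ((\<otimes>) g ` A) <#> S = (\<otimes>) g ` (A <#> S)"
  unfolding set_mult_def by (force simp: m_assoc subsetD)

end

locale finite_generating_set = group +
  fixes S :: "'a set"
  assumes S_carrier: "S \<subseteq> carrier G"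
    and S_generates: "generate G S = carrier G"
    and one_in_S: "\<one> \<in> S"
    and finite_S: "finite S"
begin

lemma inverse_generating_set: "finite_generating_set G (m_inv G ` S)"
  using S_carrier S_generates one_in_S finite_S
  by unfold_locales (auto simp: generate_inv_image intro: image_eqI[of \<one> _ \<one>])

lemma cay_vertices_eq [simp]: "cay_vertices G S = carrier G"
  unfolding cay_vertices_def by (rule S_generates)

lemma k_admissible_iff:
  "k_admissible G S k A \<longleftrightarrow>
     A \<subseteq> carrier G \<and> finite A \<and> k \<le> card A \<and> card_ge (carrier G - (A <#> S)) k"
  unfolding k_admissible_def cay_image_def by simp

lemma image_carrier: "A \<subseteq> carrier G \<Longrightarrow> A <#> S \<subseteq> carrier G"
  by (rule set_mult_closed[OF _ S_carrier])

lemma image_superset: "A \<subseteq> carrier G \<Longrightarrow> A \<subseteq> A <#> S"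
  using one_in_S unfolding set_mult_def by force

lemma image_finite: "finite A \<Longrightarrow> finite (A <#> S)"
  using finite_S unfolding set_mult_def by auto

lemma card_image_eq:
  "A \<subseteq> carrier G \<Longrightarrow> finite A \<Longrightarrow> card (A <#> S) = card A + card (cay_boundary G S A)"
  unfolding cay_boundary_def cay_image_def
  using card_Diff_subset[of A "A <#> S"] card_mono[of "A <#> S" A] image_superset image_finite
  by (metis le_add_diff_inverse)

lemma translate_admissible:
  assumes g: "g \<in> carrier G" and A: "k_admissible G S k A"
  shows "k_admissible G S k ((\<otimes>) g ` A)"
    and "card (cay_boundary G S ((\<otimes>) g ` A)) = card (cay_boundary G S A)"
proof -
  have A_carrier: "A \<subseteq> carrier G" using A by (simp add: k_admissible_iff)
  have AS: "A <#> S \<subseteq> carrier G" using A_carrier by (rule image_carrier)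
  have image: "((\<otimes>) g ` A) <#> S = (\<otimes>) g ` (A <#> S)"
    using g A_carrier S_carrier by (rule set_mult_translate)
  have "carrier G - (((\<otimes>) g ` A) <#> S) = (\<otimes>) g ` (carrier G - (A <#> S))"
    unfolding image translate_Diff[OF g subset_refl AS] translate_carrier[OF g] ..
  then show "k_admissible G S k ((\<otimes>) g ` A)"
    using A g A_carrier card_translate[OF g A_carrier] card_ge_translate[OF g, of "carrier G - (A <#> S)"]
    by (auto simp: k_admissible_iff)
  have "cay_boundary G S ((\<otimes>) g ` A) = (\<otimes>) g ` cay_boundary G S A"
    unfolding cay_boundary_def cay_image_def image translate_Diff[OF g AS A_carrier] ..
  moreover have "cay_boundary G S A \<subseteq> carrier G"
    using AS unfolding cay_boundary_def cay_image_def by blast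
  ultimately show "card (cay_boundary G S ((\<otimes>) g ` A)) = card (cay_boundary G S A)"
    using card_translate[OF g] by simp
qed

lemma translate_atom:
  assumes "g \<in> carrier G" "k_atom G S k A"
  shows "k_atom G S k ((\<otimes>) g ` A)"
proof -
  have A: "k_admissible G S k A" using assms(2) by (simp add: k_atom_def k_fragment_def)
  then have "card ((\<otimes>) g ` A) = card A"
    using card_translate[OF assms(1)] by (simp add: k_admissible_iff)
  then show ?thesis
    using assms translate_admissible[OF assms(1) A] by (simp add: k_atom_def k_fragment_def)
qed

lemma complement_image_disjoint:
  assumes "A \<subseteq> carrier G"
  shows "A \<inter> ((carrier G - (A <#> S)) <#> m_inv G ` S) = {}"
proof -
  have False if x: "x \<in> A" and z: "z \<in> carrier G" "z \<notin> A <#> S" and s: "s \<in> S" and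
    xz: "x = z \<otimes> inv s" for x z s
  proof -
    have "x \<otimes> s = z" using xz z s S_carrier by (simp add: m_assoc subsetD)
    moreover have "x \<otimes> s \<in> A <#> S" using x s unfolding set_mult_def by blast
    ultimately show False using z by simp
  qed
  then show ?thesis unfolding set_mult_def by blast
qed

lemma dual_admissible:
  assumes fin: "finite (carrier G)" and A: "k_admissible G S k A"
  shows "k_admissible G (m_inv G ` S) k (carrier G - (A <#> S))"
    and "card (cay_boundary G (m_inv G ` S) (carrier G - (A <#> S))) \<le> card (cay_boundary G S A)"
proof -
  interpret inv: finite_generating_set G "m_inv G ` S" by (rule inverse_generating_set)
  let ?D = "carrier G - (A <#> S)"
  have A_carrier: "A \<subseteq> carrier G" and kA: "k \<le> card A" and kD: "card_ge ?D k"
    using A by (auto simp: k_admissible_iff)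
  have disj: "A \<inter> (?D <#> m_inv G ` S) = {}" using A_carrier by (rule complement_image_disjoint)
  have "card A \<le> card (carrier G - (?D <#> m_inv G ` S))"
    using disj A_carrier fin by (intro card_mono) auto
  then show "k_admissible G (m_inv G ` S) k ?D"
    using kA kD fin by (auto simp: inv.k_admissible_iff card_ge_def)
  have "cay_boundary G (m_inv G ` S) ?D \<subseteq> cay_boundary G S A"
    using disj inv.image_carrier[of ?D] unfolding cay_boundary_def cay_image_def by blast
  then show "card (cay_boundary G (m_inv G ` S) ?D) \<le> card (cay_boundary G S A)"
    using finite_subset[OF _ fin] image_carrier[OF A_carrier]
    by (intro card_mono) (auto simp: cay_boundary_def cay_image_def)
qed

lemma kappa_inverse:
  assumes fin: "finite (carrier G)" and sep: "k_separable G S k"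
  shows "kappa G (m_inv G ` S) k = kappa G S k"
proof -
  interpret inv: finite_generating_set G "m_inv G ` S" by (rule inverse_generating_set)
  have inv_inv: "m_inv G ` m_inv G ` S = S" using S_carrier by (rule inv_image_inv_image)
  obtain A where A: "k_fragment G S k A" using kappa_attained[OF sep] ..
  then have A_adm: "k_admissible G S k A" by (simp add: k_fragment_def)
  note dual_A = dual_admissible[OF fin A_adm]
  have le: "kappa G (m_inv G ` S) k \<le> kappa G S k"
    using kappa_le[OF dual_A(1)] dual_A(2) A by (simp add: k_fragment_def)
  obtain B where B: "k_fragment G (m_inv G ` S) k B"
    using kappa_attained dual_A(1) k_separable_def by blast
  then have B_adm: "k_admissible G (m_inv G ` S) k B" by (simp add: k_fragment_def)
  note dual_B = inv.dual_admissible[OF fin B_adm, unfolded inv_inv]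
  have "kappa G S k \<le> kappa G (m_inv G ` S) k"
    using kappa_le[OF dual_B(1)] dual_B(2) B by (simp add: k_fragment_def)
  then show ?thesis using le by simp
qed

text \<open>The complement of the image of a fragment of \<open>S\<close> is a fragment of \<open>S\<^sup>-\<^sup>1\<close>; this is how
  the hypothesis \<open>\<alpha>\<^sub>k(S) \<le> \<alpha>\<^sub>-\<^sub>k(S)\<close> enters the argument.\<close>

lemma dual_fragment:
  assumes fin: "finite (carrier G)" and A: "k_fragment G S k A"
  shows "k_fragment G (m_inv G ` S) k (carrier G - (A <#> S))"
proof -
  have A_adm: "k_admissible G S k A" using A by (simp add: k_fragment_def)
  then have "kappa G (m_inv G ` S) k = kappa G S k"
    using kappa_inverse[OF fin] k_separable_def by blast
  then show ?thesis
    using dual_admissible[OF fin A_adm] A by (intro k_fragmentI) (simp_all add: k_fragment_def)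
qed

text \<open>Counting in a finite group: if \<open>A, B\<close> are fragments with \<open>|A \<inter> B| \<ge> k\<close>, then the union
  \<open>U\<close> of the complements of \<open>AS\<close> and \<open>BS\<close> is admissible for \<open>S\<^sup>-\<^sup>1\<close>, and its boundary, which
  avoids both \<open>U\<close> and \<open>A \<inter> B\<close>, has at least \<open>\<kappa>\<^sub>k\<close> elements.\<close>

lemma dual_union_bound:
  assumes fin: "finite (carrier G)" and A: "k_fragment G S k A" and B: "k_fragment G S k B"
    and AB: "k \<le> card (A \<inter> B)"
  shows "card ((carrier G - (A <#> S)) \<union> (carrier G - (B <#> S))) + card (A \<inter> B) + kappa G S k
           \<le> card (carrier G)"
proof -
  interpret inv: finite_generating_set G "m_inv G ` S" by (rule inverse_generating_set)
  let ?U = "(carrier G - (A <#> S)) \<union> (carrier G - (B <#> S))" and ?T = "m_inv G ` S"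
  have A_adm: "k_admissible G S k A" and B_adm: "k_admissible G S k B"
    using A B by (simp_all add: k_fragment_def)
  then have A_carrier: "A \<subseteq> carrier G" and B_carrier: "B \<subseteq> carrier G"
    by (simp_all add: k_admissible_iff)
  have "A \<inter> B \<inter> (?U <#> ?T) = {}"
    using complement_image_disjoint[OF A_carrier] complement_image_disjoint[OF B_carrier]
    by (auto simp: set_mult_Un_left)
  then have AB_outside: "A \<inter> B \<subseteq> carrier G - (?U <#> ?T)" using A_carrier by blast
  have "k \<le> card (carrier G - (A <#> S))"
    using dual_admissible(1)[OF fin A_adm] by (simp add: inv.k_admissible_iff)
  also have "\<dots> \<le> card ?U" using fin by (intro card_mono) auto
  finally have "k_admissible G ?T k ?U"
    using AB card_mono[OF _ AB_outside] fin by (auto simp: inv.k_admissible_iff card_ge_def)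
  then have "kappa G S k \<le> card (cay_boundary G ?T ?U)"
    using kappa_le kappa_inverse[OF fin] A_adm k_separable_def by metis
  also have "\<dots> \<le> card (carrier G - (?U \<union> (A \<inter> B)))"
    using AB_outside inv.image_carrier[of ?U] fin
    by (intro card_mono) (auto simp: cay_boundary_def cay_image_def)
  moreover have UAB: "?U \<union> (A \<inter> B) \<subseteq> carrier G" using A_carrier by blast
  then have "card (carrier G - (?U \<union> (A \<inter> B))) + card (?U \<union> (A \<inter> B)) = card (carrier G)"
    using card_Diff_subset[OF finite_subset[OF UAB fin] UAB] card_mono[OF fin UAB] by linarith
  ultimately have "kappa G S k + card (?U \<union> (A \<inter> B)) \<le> card (carrier G)" by linarith
  moreover have "?U \<inter> (A \<inter> B) = {}"
    using image_superset[OF A_carrier] image_superset[OF B_carrier] by blast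
  then have "card (?U \<union> (A \<inter> B)) = card ?U + card (A \<inter> B)"
    using fin A_carrier by (intro card_Un_disjoint) (auto intro: finite_subset)
  ultimately show ?thesis by linarith
qed

lemma union_complement_large:
  assumes cond: "infinite (carrier G) \<or> alpha G S k \<le> alpha_neg G S k"
    and A: "k_atom G S k A" and B: "k_fragment G S k B"
    and AB: "k \<le> card (A \<inter> B)"
  shows "card_ge (carrier G - ((A \<union> B) <#> S)) k"
proof (cases "finite (carrier G)")
  case False
  have "finite (A \<union> B)" using A B by (simp add: k_atom_def k_fragment_def k_admissible_iff)
  then show ?thesis using False image_finite Diff_infinite_finite card_ge_def by blast
next
  case fin: True
  let ?A' = "carrier G - (A <#> S)" and ?B' = "carrier G - (B <#> S)"
  have A_frag: "k_fragment G S k A" using A by (simp add: k_atom_def)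
  then have A_carrier: "A \<subseteq> carrier G" and A_finite: "finite A"
    by (simp_all add: k_fragment_def k_admissible_iff)
  have "card A \<le> card ?B'"
    using cond fin alpha_atom[OF A] alpha_le[OF dual_fragment[OF fin B]] by (simp add: alpha_neg_def)
  moreover have "card ?A' + card A + kappa G S k = card (carrier G)"
    using card_Diff_subset[OF image_finite[OF A_finite] image_carrier[OF A_carrier]]
      card_mono[OF fin image_carrier[OF A_carrier]] card_image_eq[OF A_carrier A_finite] A_frag
    by (simp add: k_fragment_def)
  moreover have "card (?A' \<union> ?B') + card (?A' \<inter> ?B') = card ?A' + card ?B'"
    using fin by (intro card_Un_Int[symmetric]) auto
  ultimately have "card (A \<inter> B) \<le> card (?A' \<inter> ?B')"
    using dual_union_bound[OF fin A_frag B AB] by linarith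
  moreover have "carrier G - ((A \<union> B) <#> S) = ?A' \<inter> ?B'" by (auto simp: set_mult_Un_left)
  ultimately show ?thesis using AB by (simp add: card_ge_def)
qed

text \<open>Submodularity of the boundary: if \<open>A \<union> B\<close> is admissible for two fragments \<open>A, B\<close> meeting
  in at least \<open>k\<close> elements, then \<open>A \<inter> B\<close> is again a fragment.\<close>

lemma fragment_inter:
  assumes A: "k_fragment G S k A" and B: "k_fragment G S k B"
    and union: "card_ge (carrier G - ((A \<union> B) <#> S)) k" and AB: "k \<le> card (A \<inter> B)"
  shows "k_fragment G S k (A \<inter> B)"
proof -
  have A_adm: "A \<subseteq> carrier G" "finite A" "k \<le> card A" "card_ge (carrier G - (A <#> S)) k"
    and B_adm: "B \<subseteq> carrier G" "finite B"
    using A B by (simp_all add: k_fragment_def k_admissible_iff)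
  have "k_admissible G S k (A \<union> B)"
    using A_adm B_adm union card_mono[of "A \<union> B" A] by (auto simp: k_admissible_iff)
  then have "kappa G S k \<le> card (cay_boundary G S (A \<union> B))" by (rule kappa_le)
  moreover have "card (((A <#> S) \<inter> (B <#> S)) - (A \<inter> B)) + card (((A <#> S) \<union> (B <#> S)) - (A \<union> B))
      \<le> card (cay_boundary G S A) + card (cay_boundary G S B)"
    unfolding cay_boundary_def cay_image_def
    using image_finite A_adm(2) B_adm(2) by (intro card_Diff_submodular)
  moreover have "card (cay_boundary G S (A \<inter> B)) \<le> card (((A <#> S) \<inter> (B <#> S)) - (A \<inter> B))"
    using set_mult_Int_left[of A B S] image_finite A_adm(2)
    by (intro card_mono) (auto simp: cay_boundary_def cay_image_def)
  ultimately have "card (cay_boundary G S (A \<inter> B)) \<le> kappa G S k"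
    using A B by (simp add: k_fragment_def cay_boundary_def cay_image_def set_mult_Un_left)
  moreover have "card_ge (carrier G - ((A \<inter> B) <#> S)) k"
    using A_adm(4) by (rule card_ge_mono) (use set_mult_Int_left[of A B S] in blast)
  ultimately show ?thesis
    using A_adm AB by (intro k_fragmentI) (auto simp: k_admissible_iff)
qed

lemma atom_subset_fragment:
  assumes cond: "infinite (carrier G) \<or> alpha G S k \<le> alpha_neg G S k"
    and A: "k_atom G S k A" and B: "k_fragment G S k B"
    and AB: "k \<le> card (A \<inter> B)"
  shows "A \<subseteq> B"
proof -
  have A_frag: "k_fragment G S k A" using A by (simp add: k_atom_def)
  then have "k_fragment G S k (A \<inter> B)"
    using B union_complement_large[OF cond A B AB] AB by (rule fragment_inter)
  then have "card A \<le> card (A \<inter> B)" using A by (simp add: k_atom_def)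
  then have "A \<inter> B = A"
    using A_frag by (intro card_seteq) (auto simp: k_fragment_def k_admissible_iff)
  then show ?thesis by blast
qed

text \<open>If \<open>|\<Pi>\<^sup>r(H)| \<ge> k\<close>, then every translate \<open>hH\<close> with \<open>h \<in> H\<close> meets \<open>H\<close> in the set
  \<open>h\<Pi>\<^sup>r(H)\<close> of at least \<open>k\<close> elements, so \<open>hH = H\<close>.\<close>

lemma atom_translation_invariant:
  assumes cond: "infinite (carrier G) \<or> alpha G S k \<le> alpha_neg G S k"
    and H: "k_atom G S k H" and one: "\<one> \<in> H" and Pi: "k \<le> card (Pi_r G H)"
    and h: "h \<in> H"
  shows "(\<otimes>) h ` H = H"
proof -
  have H_frag: "k_fragment G S k H" using H by (simp add: k_atom_def)
  then have H_carrier: "H \<subseteq> carrier G" and H_finite: "finite H"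
    by (simp_all add: k_fragment_def k_admissible_iff)
  have g: "h \<in> carrier G" using h H_carrier by blast
  have "(\<otimes>) h ` Pi_r G H \<subseteq> (\<otimes>) h ` H \<inter> H"
  proof
    fix y assume "y \<in> (\<otimes>) h ` Pi_r G H"
    then obtain x where x: "x \<in> carrier G" "H #> x = H" and y: "y = h \<otimes> x"
      unfolding Pi_r_def by blast
    have "\<one> \<otimes> x \<in> H" "h \<otimes> x \<in> H"
      using x one h unfolding r_coset_def by blast+
    then show "y \<in> (\<otimes>) h ` H \<inter> H" using x y by auto
  qed
  then have "card ((\<otimes>) h ` Pi_r G H) \<le> card ((\<otimes>) h ` H \<inter> H)"
    using H_finite by (intro card_mono) auto
  moreover have "card ((\<otimes>) h ` Pi_r G H) = card (Pi_r G H)"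
    using card_translate[OF g] by (simp add: Pi_r_def)
  ultimately have "k \<le> card ((\<otimes>) h ` H \<inter> H)" using Pi by linarith
  then have "(\<otimes>) h ` H \<subseteq> H"
    using atom_subset_fragment[OF cond translate_atom[OF g H] H_frag] by simp
  then show ?thesis using H_finite card_translate[OF g H_carrier] by (intro card_seteq) auto
qed

end

lemma (in group) subgroup_if_translation_invariant:
  assumes H: "H \<subseteq> carrier G" and one: "\<one> \<in> H"
    and invariant: "\<And>h. h \<in> H \<Longrightarrow> (\<otimes>) h ` H = H"
  shows "subgroup H G"
proof (rule subgroup.intro)
  fix x y assume x: "x \<in> H"
  then obtain z where z: "z \<in> H" "x \<otimes> z = \<one>" using invariant one by (metis imageE)
  have carrier: "x \<in> carrier G" "z \<in> carrier G" using x z H by auto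
  have "inv x = inv x \<otimes> (x \<otimes> z)" using carrier z by simp
  also have "\<dots> = z" using carrier by (simp add: m_assoc[symmetric])
  finally show "inv x \<in> H" using z by simp
  assume "y \<in> H"
  then show "x \<otimes> y \<in> H" using invariant[OF x] by blast
qed (use H one in auto)

theorem mainTheorem6:
  fixes G :: "('a, 'b) monoid_scheme" and S H :: "'a set" and k :: nat
  assumes "group G"
    and "finite S" and "S \<subseteq> carrier G" and "generate G S = carrier G"
    and "\<one>\<^bsub>G\<^esub> \<in> S"
    and "k_separable G S k"
    and "k_atom G S k H" and "\<one>\<^bsub>G\<^esub> \<in> H"
    and "infinite (carrier G) \<or> alpha G S k \<le> alpha_neg G S k"
    and "k \<le> card (Pi_r G H)"
  shows "subgroup H G"
proof -
  interpret finite_generating_set G S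
    using assms(1-5) by (intro finite_generating_set.intro finite_generating_set_axioms.intro)
  have H_carrier: "H \<subseteq> carrier G"
    using assms(7) by (simp add: k_atom_def k_fragment_def k_admissible_iff)
  show ?thesis
    using H_carrier assms(8) atom_translation_invariant[OF assms(9,7,8,10)]
    by (rule subgroup_if_translation_invariant)
qed

end
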